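(* Let $\beta\in\mathbb{R}^n_{>}$ and $\theta\in\Theta^\beta$, with agents indexed so that $v_1(\theta_1)\ge v_2(\theta_2)\ge\dots\ge v_n(\theta_n)$ (and $v_{n+1}(\theta_{n+1}):=0$). Then every efficient Nash equilibrium of $\mathbf{1}$-GSP for $\theta$ yields revenue at least $$\frac12\left(R(\theta)-\sum_{j=1}^{k}(\beta_j-\beta_{j+1})\cdot v_{j+1}(\theta_{j+1})\right).$$
   Context: Sponsored search setting: agents $N=\{1,\dots,n\}$, slots $1,\dots,k$ with $k\le n$; an outcome assigns agents to distinct positions, position $j\le k$ meaning slot $j$, others getting nothing (value 0); utilities quasilinear. $\mathbb{R}^n_{>}$: vectors $\beta$ with $1=\beta_1>\dots>\beta_k>0$ and $\beta_j=0$ for $j>k$ (so $\beta_{k+1}=0$). $\Theta^\beta$: type profiles in which agent $i$ has $v_i(\theta_i)\ge0$ and values slot $j$ at $\beta_j v_i(\theta_i)$. VCG outcome for $\theta$: the assignment and Clarke payments of the VCG mechanism (bids on every slot, bid-maximizing assignment) under truthful bids; $R(\theta)$ is its revenue. $\mathbf{1}$-GSP: each agent submits a single $b_i\ge0$ used as its bid on every slot; agents are ranked by $b_i$ (ties arbitrary), the rank-$j$ agent ($j\le k$) gets slot $j$ and pays the $(j+1)$-st highest submitted value ($0$ if none). Revenue = sum of payments. A Nash equilibrium (complete information, for $\theta$) is a profile of submissions from which no agent gains strictly by unilateral deviation; it is efficient if its assignment maximizes $\sum_i$ (true value of agent $i$ for its assigned slot). *)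

theory Defs
  imports Complex_Main
begin

(* Agents are 1..n, positions are 1..n; position j <= k is slot j, positions > k get nothing.
   beta :: nat => real gives beta_j (beta_j = 0 for j > k), v :: nat => real gives v_i(theta_i). *)

definition beta_ok :: "nat \<Rightarrow> nat \<Rightarrow> (nat \<Rightarrow> real) \<Rightarrow> bool" where
  "beta_ok n k \<beta> \<longleftrightarrow> k \<le> n \<and> \<beta> 1 = 1 \<and> (\<forall>j. 1 \<le> j \<and> j < k \<longrightarrow> \<beta> (j+1) < \<beta> j)
      \<and> \<beta> k > 0 \<and> (\<forall>j. k < j \<longrightarrow> \<beta> j = 0)"

definition assignment :: "nat \<Rightarrow> (nat \<Rightarrow> nat) \<Rightarrow> bool" where
  "assignment n \<sigma> \<longleftrightarrow> bij_betw \<sigma> {1..n} {1..n}"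

definition welfare :: "(nat \<Rightarrow> real) \<Rightarrow> (nat \<Rightarrow> real) \<Rightarrow> nat set \<Rightarrow> (nat \<Rightarrow> nat) \<Rightarrow> real" where
  "welfare \<beta> v A \<sigma> = (\<Sum>i\<in>A. \<beta> (\<sigma> i) * v i)"

definition efficient :: "nat \<Rightarrow> (nat \<Rightarrow> real) \<Rightarrow> (nat \<Rightarrow> real) \<Rightarrow> (nat \<Rightarrow> nat) \<Rightarrow> bool" where
  "efficient n \<beta> v \<sigma> \<longleftrightarrow> assignment n \<sigma> \<and>
     (\<forall>\<pi>. assignment n \<pi> \<longrightarrow> welfare \<beta> v {1..n} \<pi> \<le> welfare \<beta> v {1..n} \<sigma>)"

definition opt_welfare :: "nat \<Rightarrow> (nat \<Rightarrow> real) \<Rightarrow> (nat \<Rightarrow> real) \<Rightarrow> nat set \<Rightarrow> real" where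
  "opt_welfare n \<beta> v A = Max {welfare \<beta> v A \<pi> | \<pi>. inj_on \<pi> A \<and> \<pi> ` A \<subseteq> {1..n}}"

definition vcg_assignment :: "nat \<Rightarrow> (nat \<Rightarrow> real) \<Rightarrow> (nat \<Rightarrow> real) \<Rightarrow> nat \<Rightarrow> nat" where
  "vcg_assignment n \<beta> v = (SOME \<sigma>. efficient n \<beta> v \<sigma>)"

definition clarke_payment :: "nat \<Rightarrow> (nat \<Rightarrow> real) \<Rightarrow> (nat \<Rightarrow> real) \<Rightarrow> nat \<Rightarrow> real" where
  "clarke_payment n \<beta> v i =
     opt_welfare n \<beta> v ({1..n} - {i}) - welfare \<beta> v ({1..n} - {i}) (vcg_assignment n \<beta> v)"

definition vcg_revenue :: "nat \<Rightarrow> (nat \<Rightarrow> real) \<Rightarrow> (nat \<Rightarrow> real) \<Rightarrow> real" where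
  "vcg_revenue n \<beta> v = (\<Sum>i\<in>{1..n}. clarke_payment n \<beta> v i)"

(* the m-th highest submitted value (m >= 1), 0 if there is none *)
definition nth_highest :: "nat \<Rightarrow> (nat \<Rightarrow> real) \<Rightarrow> nat \<Rightarrow> real" where
  "nth_highest n b m = (if 1 \<le> m \<and> m \<le> n then rev (sort (map b [1..<n+1])) ! (m - 1) else 0)"

(* A 1-GSP ranking rule: for every bid profile, a ranking of the agents consistent with the
   bids (ties broken arbitrarily). *)
definition gsp_rule :: "nat \<Rightarrow> ((nat \<Rightarrow> real) \<Rightarrow> nat \<Rightarrow> nat) \<Rightarrow> bool" where
  "gsp_rule n rank \<longleftrightarrow> (\<forall>b. assignment n (rank b) \<and>
      (\<forall>i\<in>{1..n}. \<forall>i'\<in>{1..n}. b i > b i' \<longrightarrow> rank b i < rank b i'))"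

definition gsp_payment :: "nat \<Rightarrow> nat \<Rightarrow> ((nat \<Rightarrow> real) \<Rightarrow> nat \<Rightarrow> nat) \<Rightarrow> (nat \<Rightarrow> real) \<Rightarrow> nat \<Rightarrow> real" where
  "gsp_payment n k rank b i = (if rank b i \<le> k then nth_highest n b (rank b i + 1) else 0)"

definition gsp_utility :: "nat \<Rightarrow> nat \<Rightarrow> ((nat \<Rightarrow> real) \<Rightarrow> nat \<Rightarrow> nat) \<Rightarrow> (nat \<Rightarrow> real) \<Rightarrow> (nat \<Rightarrow> real)
      \<Rightarrow> (nat \<Rightarrow> real) \<Rightarrow> nat \<Rightarrow> real" where
  "gsp_utility n k rank \<beta> v b i =
     (if rank b i \<le> k then \<beta> (rank b i) * v i else 0) - gsp_payment n k rank b i"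

definition gsp_revenue :: "nat \<Rightarrow> nat \<Rightarrow> ((nat \<Rightarrow> real) \<Rightarrow> nat \<Rightarrow> nat) \<Rightarrow> (nat \<Rightarrow> real) \<Rightarrow> real" where
  "gsp_revenue n k rank b = (\<Sum>i\<in>{1..n}. gsp_payment n k rank b i)"

definition gsp_nash :: "nat \<Rightarrow> nat \<Rightarrow> ((nat \<Rightarrow> real) \<Rightarrow> nat \<Rightarrow> nat) \<Rightarrow> (nat \<Rightarrow> real) \<Rightarrow> (nat \<Rightarrow> real)
      \<Rightarrow> (nat \<Rightarrow> real) \<Rightarrow> bool" where
  "gsp_nash n k rank \<beta> v b \<longleftrightarrow> (\<forall>i\<in>{1..n}. b i \<ge> 0) \<and>
     (\<forall>i\<in>{1..n}. \<forall>x\<ge>0. gsp_utility n k rank \<beta> v (b(i := x)) i \<le> gsp_utility n k rank \<beta> v b i)"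

end

theory Submission
  imports Defs "HOL-Library.Multiset" "HOL-Library.FuncSet"
begin

text \<open>
  Let \<open>p\<^sub>j\<close> be the price of slot \<open>j\<close> in the equilibrium. The agent in slot \<open>i + 2\<close> (for
  \<open>i + 2 = k + 1\<close>: an unslotted agent of value at least \<open>v\<^sub>k\<^sub>+\<^sub>1\<close>) could bid just above
  the \<open>(i+1)\<close>-st highest bid and win slot \<open>i + 1\<close> at price at most \<open>p\<^sub>i\<close>. Since this does
  not pay off and efficiency gives that agent a value at least \<open>v\<^sub>i\<^sub>+\<^sub>2\<close>, we get
  \<open>(\<beta>\<^sub>i\<^sub>+\<^sub>1 - \<beta>\<^sub>i\<^sub>+\<^sub>2) v\<^sub>i\<^sub>+\<^sub>2 + p\<^sub>i\<^sub>+\<^sub>2 \<le> p\<^sub>i\<close>. Summing these inequalities along every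
  tail of the slot sequence bounds \<open>\<Sum>\<^sub>l (l - 1)(\<beta>\<^sub>l - \<beta>\<^sub>l\<^sub>+\<^sub>1) v\<^sub>l\<^sub>+\<^sub>1\<close> by twice the
  revenue. On the VCG side, writing \<open>\<beta>\<^sub>t = \<Sum>\<^bsub>l \<ge> t\<^esub> (\<beta>\<^sub>l - \<beta>\<^sub>l\<^sub>+\<^sub>1)\<close> decomposes
  every welfare into layers, and layer by layer the Clarke payments add up to at most
  \<open>\<Sum>\<^sub>l l (\<beta>\<^sub>l - \<beta>\<^sub>l\<^sub>+\<^sub>1) v\<^sub>l\<^sub>+\<^sub>1\<close>.
\<close>

lemma beta_ok_le: "beta_ok n k \<beta> \<Longrightarrow> k \<le> n"
  unfolding beta_ok_def by simp

lemma beta_ok_zero: "beta_ok n k \<beta> \<Longrightarrow> k < s \<Longrightarrow> \<beta> s = 0"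
  unfolding beta_ok_def by simp

lemma beta_ok_less_within:
  assumes \<beta>: "beta_ok n k \<beta>" and s: "1 \<le> s" and "s < t" "t \<le> k"
  shows "\<beta> t < \<beta> s"
proof -
  have "Suc s \<le> t" using \<open>s < t\<close> by simp
  then show ?thesis using \<open>t \<le> k\<close>
  proof (induction t rule: dec_induct)
    case base
    then show ?case using \<beta> s unfolding beta_ok_def by simp
  next
    case (step t)
    then have "\<beta> (t + 1) < \<beta> t" using \<beta> s unfolding beta_ok_def by simp
    with step show ?case by simp
  qed
qed

lemma beta_ok_pos:
  assumes \<beta>: "beta_ok n k \<beta>" and "1 \<le> s" "s \<le> k"
  shows "0 < \<beta> s"
proof -
  have "\<beta> k \<le> \<beta> s"
    using beta_ok_less_within[OF assms(1,2)] \<open>s \<le> k\<close> by (cases "s = k") (auto simp: less_imp_le)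
  moreover have "0 < \<beta> k" using \<beta> unfolding beta_ok_def by simp
  ultimately show ?thesis by simp
qed

lemma beta_ok_less:
  assumes \<beta>: "beta_ok n k \<beta>" and "1 \<le> s" "s < t" "s \<le> k"
  shows "\<beta> t < \<beta> s"
  using beta_ok_less_within[OF assms(1-3)] beta_ok_zero[OF \<beta>, of t] beta_ok_pos[OF \<beta>, of s] assms
  by (cases "t \<le> k") auto

lemma beta_ok_antimono:
  assumes \<beta>: "beta_ok n k \<beta>" and "1 \<le> s" "s \<le> t"
  shows "\<beta> t \<le> \<beta> s"
  using beta_ok_less[OF \<beta>, of s t] beta_ok_zero[OF \<beta>, of s] beta_ok_zero[OF \<beta>, of t] assms
  by (cases "s = t"; cases "s \<le> k") auto

lemma values_antimono:
  fixes v :: "nat \<Rightarrow> real"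
  assumes sorted: "\<forall>i. 1 \<le> i \<and> i < n \<longrightarrow> v (i+1) \<le> v i" and "1 \<le> a" "a \<le> c" "c \<le> n"
  shows "v c \<le> v a"
  using \<open>a \<le> c\<close> \<open>c \<le> n\<close>
proof (induction c rule: dec_induct)
  case (step c)
  then have "v (c + 1) \<le> v c" using sorted \<open>1 \<le> a\<close> by simp
  with step show ?case by simp
qed simp

definition ranks_bids :: "nat \<Rightarrow> (nat \<Rightarrow> real) \<Rightarrow> (nat \<Rightarrow> nat) \<Rightarrow> bool" where
  "ranks_bids n b \<rho> \<longleftrightarrow> bij_betw \<rho> {1..n} {1..n} \<and>
     (\<forall>i\<in>{1..n}. \<forall>i'\<in>{1..n}. b i > b i' \<longrightarrow> \<rho> i < \<rho> i')"

lemma gsp_rule_ranks_bids: "gsp_rule n rank \<Longrightarrow> ranks_bids n b (rank b)"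
  unfolding gsp_rule_def ranks_bids_def assignment_def by blast

lemma ranks_bids_bij: "ranks_bids n b \<rho> \<Longrightarrow> bij_betw \<rho> {1..n} {1..n}"
  unfolding ranks_bids_def by blast

lemma ranks_bids_less: "ranks_bids n b \<rho> \<Longrightarrow> c \<in> {1..n} \<Longrightarrow> d \<in> {1..n} \<Longrightarrow> b d < b c \<Longrightarrow> \<rho> c < \<rho> d"
  unfolding ranks_bids_def by blast

lemma ranks_bids_antimono:
  "ranks_bids n b \<rho> \<Longrightarrow> c \<in> {1..n} \<Longrightarrow> d \<in> {1..n} \<Longrightarrow> \<rho> c \<le> \<rho> d \<Longrightarrow> b d \<le> b c"
  using ranks_bids_less[of n b \<rho> d c] by fastforce

lemma ranks_bids_inv:
  assumes "ranks_bids n b \<rho>" "t \<in> {1..n}"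
  shows "inv_into {1..n} \<rho> t \<in> {1..n}" "\<rho> (inv_into {1..n} \<rho> t) = t"
  using assms bij_betw_apply[OF bij_betw_inv_into] bij_betw_inv_into_right ranks_bids_bij by metis+

lemma nth_highest_ranks_bids:
  assumes \<rho>: "ranks_bids n b \<rho>" and m: "1 \<le> m" "m \<le> n"
  shows "nth_highest n b m = b (inv_into {1..n} \<rho> m)"
proof -
  define \<tau> where "\<tau> = inv_into {1..n} \<rho>"
  define L where "L = map (b \<circ> \<tau>) [1..<n+1]"
  have \<tau>: "bij_betw \<tau> {1..n} {1..n}"
    unfolding \<tau>_def using bij_betw_inv_into[OF ranks_bids_bij[OF \<rho>]] .
  have "set [1..<n+1] = {1..n}" by auto
  then have "distinct (map \<tau> [1..<n+1]) \<and> set (map \<tau> [1..<n+1]) = set [1..<n+1]"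
    using \<tau> unfolding bij_betw_def distinct_map set_map by simp
  then have "mset (map \<tau> [1..<n+1]) = mset [1..<n+1]"
    by (metis distinct_upt set_eq_iff_mset_eq_distinct)
  then have "mset (rev L) = mset (map b [1..<n+1])"
    unfolding L_def by (metis mset_map mset_rev map_map)
  moreover have "sorted (rev L)"
    unfolding sorted_rev_iff_nth_mono
  proof (intro allI impI)
    fix i j assume "i \<le> j" "j < length L"
    then have "i + 1 \<in> {1..n}" "j + 1 \<in> {1..n}" "L ! i = b (\<tau> (i+1))" "L ! j = b (\<tau> (j+1))"
      by (auto simp del: upt_Suc simp: L_def)
    then show "L ! j \<le> L ! i"
      using ranks_bids_antimono[OF \<rho>] ranks_bids_inv[OF \<rho>] \<open>i \<le> j\<close> unfolding \<tau>_def by simp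
  qed
  ultimately have "sort (map b [1..<n+1]) = rev L"
    by (rule properties_for_sort)
  moreover have "[1..<n+1] ! (m - 1) = m" using m by (subst nth_upt) auto
  ultimately show ?thesis using m by (simp del: upt_Suc add: nth_highest_def L_def \<tau>_def)
qed

lemma nth_highest_nonneg:
  assumes "\<forall>i\<in>{1..n}. 0 \<le> b i"
  shows "0 \<le> nth_highest n b m"
proof (cases "1 \<le> m \<and> m \<le> n")
  case True
  then have "m - 1 < length (rev (sort (map b [1..<n+1])))" by auto
  then have "nth_highest n b m \<in> set (map b [1..<n+1])"
    using True unfolding nth_highest_def by (metis nth_mem set_rev set_sort)
  with assms show ?thesis by auto
next
  case False
  then show ?thesis by (auto simp: nth_highest_def)
qed

lemma card_rank_le:
  assumes "bij_betw \<rho> {1..n} {1..n}" "r \<le> n"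
  shows "card {c\<in>{1..n}. \<rho> c \<le> r} = r"
proof -
  have "\<rho> ` {c\<in>{1..n}. \<rho> c \<le> r} = {t\<in>\<rho> ` {1..n}. t \<le> r}"
    by blast
  also have "\<dots> = {1..r}"
    using assms by (auto simp: bij_betw_def)
  finally have "\<rho> ` {c\<in>{1..n}. \<rho> c \<le> r} = {1..r}" .
  moreover have "inj_on \<rho> {c\<in>{1..n}. \<rho> c \<le> r}"
    using assms(1) unfolding bij_betw_def by (auto intro: inj_on_subset)
  ultimately show ?thesis by (metis card_image card_atLeastAtMost diff_Suc_1)
qed

lemma card_rank_less:
  assumes "bij_betw \<rho> {1..n} {1..n}" "1 \<le> r" "r \<le> n"
  shows "card {c\<in>{1..n}. \<rho> c < r} = r - 1"
proof -
  have "{c\<in>{1..n}. \<rho> c < r} = {c\<in>{1..n}. \<rho> c \<le> r - 1}" using assms(2) by auto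
  then show ?thesis using card_rank_le[OF assms(1)] assms(3) by simp
qed

lemma exists_rank_ge:
  fixes \<sigma> :: "nat \<Rightarrow> nat"
  assumes "bij_betw \<sigma> {1..n} {1..n}" "1 \<le> t" "t \<le> n"
  obtains a where "a \<in> {1..t}" "t \<le> \<sigma> a"
proof -
  have "\<not> \<sigma> ` {1..t} \<subseteq> {1..<t}"
  proof
    assume "\<sigma> ` {1..t} \<subseteq> {1..<t}"
    moreover have "{1..t} \<subseteq> {1..n}" using assms by auto
    then have "inj_on \<sigma> {1..t}"
      using assms(1) inj_on_subset unfolding bij_betw_def by blast
    ultimately have "card {1..t} \<le> card {1..<t}"
      using card_inj_on_le[of \<sigma> "{1..t}" "{1..<t}"] by blast
    then show False using assms by simp
  qed
  then obtain a where a: "a \<in> {1..t}" "\<sigma> a \<notin> {1..<t}" by blast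
  then have "\<sigma> a \<in> {1..n}" using assms bij_betw_apply by fastforce
  then show ?thesis using that a by simp
qed

lemma exists_gt_less_all_greater:
  fixes p :: real and f :: "'a \<Rightarrow> real"
  assumes "finite I"
  obtains x where "p < x" "\<And>i. i \<in> I \<Longrightarrow> p < f i \<Longrightarrow> x < f i"
proof (cases "{i\<in>I. p < f i} = {}")
  case True
  then show ?thesis using that[of "p + 1"] by auto
next
  case False
  define m where "m = Min (f ` {i\<in>I. p < f i})"
  have "m \<in> f ` {i\<in>I. p < f i}"
    using assms False unfolding m_def by (intro Min_in) auto
  moreover have "m \<le> f i" if "i \<in> I" "p < f i" for i
    using assms that unfolding m_def by (intro Min_le) auto
  ultimately show ?thesis
    by (intro that[of "(p + m) / 2"]) fastforce+
qed

lemma overbid_rank_le: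
  assumes \<sigma>: "ranks_bids n b \<sigma>" and \<rho>: "ranks_bids n (b(a := x)) \<rho>"
    and a: "a \<in> {1..n}" and m: "1 \<le> m" "m \<le> n" and x: "nth_highest n b m < x"
  shows "\<rho> a \<le> m"
proof -
  define z where "z = inv_into {1..n} \<sigma> m"
  have z: "z \<in> {1..n}" "\<sigma> z = m" "nth_highest n b m = b z"
    using ranks_bids_inv[OF \<sigma>] nth_highest_ranks_bids[OF \<sigma> m] m unfolding z_def by auto
  have "{c\<in>{1..n}. \<rho> c < \<rho> a} \<subseteq> {c\<in>{1..n}. \<sigma> c < m}"
  proof safe
    fix c assume c: "c \<in> {1..n}" "\<rho> c < \<rho> a"
    then have "\<not> (b(a := x)) c < (b(a := x)) a"
      using ranks_bids_less[OF \<rho> a c(1)] c(2) by auto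
    then have "b z < b c" using c x z by (cases "c = a") auto
    then show "\<sigma> c < m" using ranks_bids_less[OF \<sigma> c(1) z(1)] z by simp
  qed
  then have "card {c\<in>{1..n}. \<rho> c < \<rho> a} \<le> card {c\<in>{1..n}. \<sigma> c < m}"
    by (intro card_mono) auto
  moreover have "\<rho> a \<in> {1..n}" using a bij_betw_apply[OF ranks_bids_bij[OF \<rho>]] by blast
  ultimately show ?thesis
    using card_rank_less[OF ranks_bids_bij[OF \<rho>], of "\<rho> a"]
      card_rank_less[OF ranks_bids_bij[OF \<sigma>], of m] m by simp
qed

lemma overbid_price_le:
  assumes \<rho>: "ranks_bids n (b(a := x)) \<rho>" and a: "a \<in> {1..n}"
    and gap: "\<And>c. c \<in> {1..n} \<Longrightarrow> p < b c \<Longrightarrow> x < b c" and "0 \<le> p"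
  shows "nth_highest n (b(a := x)) (\<rho> a + 1) \<le> p"
proof (cases "\<rho> a + 1 \<le> n")
  case True
  define z where "z = inv_into {1..n} \<rho> (\<rho> a + 1)"
  have z: "z \<in> {1..n}" "\<rho> z = \<rho> a + 1" "nth_highest n (b(a := x)) (\<rho> a + 1) = (b(a := x)) z"
    using ranks_bids_inv[OF \<rho>] nth_highest_ranks_bids[OF \<rho>] True unfolding z_def by auto
  then have "z \<noteq> a" by auto
  show ?thesis
  proof (rule ccontr)
    assume "\<not> ?thesis"
    then have "x < b z" using gap z \<open>z \<noteq> a\<close> by simp
    then have "\<rho> z < \<rho> a" using ranks_bids_less[OF \<rho> z(1) a] \<open>z \<noteq> a\<close> by simp
    then show False using z by simp
  qed
next
  case False
  then show ?thesis using \<open>0 \<le> p\<close> by (simp add: nth_highest_def)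
qed

lemma gsp_nash_overbid:
  assumes rule: "gsp_rule n rank" and nash: "gsp_nash n k rank \<beta> v b" and \<beta>: "beta_ok n k \<beta>"
    and "0 \<le> v a" and a: "a \<in> {1..n}" and m: "1 \<le> m" "m \<le> k"
  shows "\<beta> m * v a - nth_highest n b m \<le> gsp_utility n k rank \<beta> v b a"
proof -
  define p where "p = nth_highest n b m"
  have bids: "\<forall>i\<in>{1..n}. 0 \<le> b i"
    and stable: "\<forall>i\<in>{1..n}. \<forall>x\<ge>0. gsp_utility n k rank \<beta> v (b(i := x)) i \<le> gsp_utility n k rank \<beta> v b i"
    using nash unfolding gsp_nash_def by blast+
  have "0 \<le> p" using nth_highest_nonneg[OF bids] unfolding p_def .
  \<comment> \<open>bid above \<open>p\<close> but below every bid that exceeds \<open>p\<close>: this wins a slot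
    \<open>\<le> m\<close>, and the next bid below, which is the price, is at most \<open>p\<close>\<close>
  obtain x where "p < x" and gap: "\<And>c. c \<in> {1..n} \<Longrightarrow> p < b c \<Longrightarrow> x < b c"
    using exists_gt_less_all_greater[of "{1..n}" p b] by blast
  define r where "r = rank (b(a := x)) a"
  have "m \<le> n" using m beta_ok_le[OF \<beta>] by simp
  then have "r \<le> m"
    using overbid_rank_le[OF gsp_rule_ranks_bids[OF rule] gsp_rule_ranks_bids[OF rule] a m(1)]
      \<open>p < x\<close> unfolding p_def r_def by simp
  moreover have "r \<in> {1..n}"
    using bij_betw_apply[OF ranks_bids_bij[OF gsp_rule_ranks_bids[OF rule]] a] unfolding r_def .
  ultimately have "\<beta> m * v a \<le> \<beta> r * v a"
    using beta_ok_antimono[OF \<beta>, of r m] \<open>0 \<le> v a\<close> by (simp add: mult_right_mono)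
  moreover have "nth_highest n (b(a := x)) (r + 1) \<le> p"
    using overbid_price_le[OF gsp_rule_ranks_bids[OF rule] a gap \<open>0 \<le> p\<close>] unfolding r_def .
  moreover have "gsp_utility n k rank \<beta> v (b(a := x)) a = \<beta> r * v a - nth_highest n (b(a := x)) (r + 1)"
    using \<open>r \<le> m\<close> m unfolding gsp_utility_def gsp_payment_def r_def by simp
  moreover have "gsp_utility n k rank \<beta> v (b(a := x)) a \<le> gsp_utility n k rank \<beta> v b a"
    using stable a \<open>0 \<le> p\<close> \<open>p < x\<close> by simp
  ultimately show ?thesis unfolding p_def by linarith
qed

lemma efficient_swap_value_le:
  assumes eff: "efficient n \<beta> v \<sigma>" and \<beta>: "beta_ok n k \<beta>"
    and a: "a \<in> {1..n}" and c: "c \<in> {1..n}" and less: "\<sigma> a < \<sigma> c" and "\<sigma> a \<le> k"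
  shows "v c \<le> v a"
proof -
  define A where "A = {1..n}"
  define g where "g x = (if x = a then c else if x = c then a else x)" for x
  have "a \<noteq> c" using less by auto
  have \<sigma>: "bij_betw \<sigma> A A" using eff unfolding efficient_def assignment_def A_def by blast
  have "bij_betw g A A"
    by (rule bij_betw_byWitness[of A g g]) (use a c in \<open>auto simp: g_def A_def\<close>)
  then have "welfare \<beta> v A (\<sigma> \<circ> g) \<le> welfare \<beta> v A \<sigma>"
    using eff bij_betw_trans[OF _ \<sigma>] unfolding efficient_def assignment_def A_def by blast
  moreover have "welfare \<beta> v A \<pi> = welfare \<beta> v (A - {a, c}) \<pi> + \<beta> (\<pi> a) * v a + \<beta> (\<pi> c) * v c" for \<pi>
    using a c \<open>a \<noteq> c\<close> unfolding welfare_def A_def by (subst sum.subset_diff[of "{a, c}"]) auto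
  moreover have "welfare \<beta> v (A - {a, c}) (\<sigma> \<circ> g) = welfare \<beta> v (A - {a, c}) \<sigma>"
    unfolding welfare_def by (rule sum.cong) (auto simp: g_def)
  ultimately have "(\<beta> (\<sigma> a) - \<beta> (\<sigma> c)) * (v c - v a) \<le> 0"
    using \<open>a \<noteq> c\<close> by (simp add: g_def algebra_simps)
  moreover have "1 \<le> \<sigma> a" using bij_betw_apply[OF \<sigma>] a unfolding A_def by fastforce
  then have "\<beta> (\<sigma> c) < \<beta> (\<sigma> a)" using beta_ok_less[OF \<beta> _ less \<open>\<sigma> a \<le> k\<close>] by simp
  ultimately show ?thesis by (simp add: mult_le_0_iff)
qed

lemma efficient_value_le_at_rank:
  assumes eff: "efficient n \<beta> v \<sigma>" and \<beta>: "beta_ok n k \<beta>"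
    and sorted: "\<forall>i. 1 \<le> i \<and> i < n \<longrightarrow> v (i+1) \<le> v i" and t: "1 \<le> t" "t \<le> k"
  shows "v t \<le> v (inv_into {1..n} \<sigma> t)"
proof -
  define d where "d = inv_into {1..n} \<sigma> t"
  have \<sigma>: "bij_betw \<sigma> {1..n} {1..n}" using eff unfolding efficient_def assignment_def by blast
  have "t \<le> n" using t beta_ok_le[OF \<beta>] by simp
  then have d: "d \<in> {1..n}" "\<sigma> d = t"
    using t bij_betw_apply[OF bij_betw_inv_into[OF \<sigma>]] bij_betw_inv_into_right[OF \<sigma>]
    unfolding d_def by auto
  obtain a where a: "a \<in> {1..t}" "t \<le> \<sigma> a" using exists_rank_ge[OF \<sigma> t(1) \<open>t \<le> n\<close>] .
  then have "a \<in> {1..n}" using \<open>t \<le> n\<close> by simp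
  have "v t \<le> v a" using values_antimono[OF sorted] a \<open>t \<le> n\<close> by simp
  moreover have "v a \<le> v d"
  proof (cases "\<sigma> a = t")
    case True
    then have "a = d" using \<sigma> \<open>a \<in> {1..n}\<close> d unfolding bij_betw_def by (metis inj_onD)
    then show ?thesis by simp
  next
    case False
    then show ?thesis using efficient_swap_value_le[OF eff \<beta> d(1) \<open>a \<in> {1..n}\<close>] d a t by simp
  qed
  ultimately show ?thesis unfolding d_def by simp
qed

definition slot_price :: "nat \<Rightarrow> nat \<Rightarrow> (nat \<Rightarrow> real) \<Rightarrow> nat \<Rightarrow> real" where
  "slot_price n k b j = (if j \<le> k then nth_highest n b (j + 1) else 0)"

definition next_value :: "nat \<Rightarrow> (nat \<Rightarrow> real) \<Rightarrow> nat \<Rightarrow> real" where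
  "next_value n v l = (if l + 1 \<le> n then v (l + 1) else 0)"

lemma gsp_revenue_eq_sum_slot_price:
  assumes "gsp_rule n rank" "k \<le> n"
  shows "gsp_revenue n k rank b = (\<Sum>j=1..k. slot_price n k b j)"
proof -
  have "gsp_revenue n k rank b = (\<Sum>i\<in>{1..n}. slot_price n k b (rank b i))"
    unfolding gsp_revenue_def gsp_payment_def slot_price_def by simp
  also have "\<dots> = (\<Sum>j\<in>{1..n}. slot_price n k b j)"
    using sum.reindex_bij_betw[OF ranks_bids_bij[OF gsp_rule_ranks_bids[OF assms(1)]]] .
  also have "\<dots> = (\<Sum>j\<in>{1..k}. slot_price n k b j)"
    using assms(2) by (intro sum.mono_neutral_right) (auto simp: slot_price_def)
  finally show ?thesis .
qed

text \<open>For \<open>t = k + 1\<close> the agent is an unslotted one found by pigeonhole among the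
  \<open>k + 1\<close> most valuable agents.\<close>

lemma gsp_agent_at_position:
  assumes \<beta>: "beta_ok n k \<beta>" and sorted: "\<forall>i. 1 \<le> i \<and> i < n \<longrightarrow> v (i+1) \<le> v i"
    and rule: "gsp_rule n rank" and eff: "efficient n \<beta> v (rank b)"
    and t: "1 \<le> t" "t \<le> k + 1" "t \<le> n"
  obtains a where "a \<in> {1..n}" "v t \<le> v a"
    "gsp_utility n k rank \<beta> v b a = \<beta> t * v a - slot_price n k b t"
proof (cases "t \<le> k")
  case True
  define a where "a = inv_into {1..n} (rank b) t"
  have "a \<in> {1..n}" "rank b a = t"
    using ranks_bids_inv[OF gsp_rule_ranks_bids[OF rule]] t unfolding a_def by auto
  moreover have "v t \<le> v a"
    using efficient_value_le_at_rank[OF eff \<beta> sorted t(1) True] unfolding a_def .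
  ultimately show ?thesis
    using that True unfolding gsp_utility_def gsp_payment_def slot_price_def by simp
next
  case False
  have \<sigma>: "bij_betw (rank b) {1..n} {1..n}" using ranks_bids_bij[OF gsp_rule_ranks_bids[OF rule]] .
  obtain a where a: "a \<in> {1..t}" "t \<le> rank b a" using exists_rank_ge[OF \<sigma> t(1,3)] .
  then have "v t \<le> v a" using values_antimono[OF sorted] t by simp
  moreover have "gsp_utility n k rank \<beta> v b a = 0"
    using a False unfolding gsp_utility_def gsp_payment_def by simp
  moreover have "\<beta> t = 0" "slot_price n k b t = 0"
    using beta_ok_zero[OF \<beta>] False unfolding slot_price_def by auto
  moreover have "a \<in> {1..n}" using a t by auto
  ultimately show ?thesis using that by simp
qed

lemma slot_price_step:
  assumes \<beta>: "beta_ok n k \<beta>" and vals: "\<forall>i\<in>{1..n}. 0 \<le> v i"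
    and sorted: "\<forall>i. 1 \<le> i \<and> i < n \<longrightarrow> v (i+1) \<le> v i"
    and rule: "gsp_rule n rank" and nash: "gsp_nash n k rank \<beta> v b" and eff: "efficient n \<beta> v (rank b)"
    and i: "1 \<le> i" "i \<le> k"
  shows "(\<beta> (i+1) - \<beta> (i+2)) * next_value n v (i+1) + slot_price n k b (i+2) \<le> slot_price n k b i"
proof (cases "i + 2 \<le> k + 1 \<and> i + 2 \<le> n")
  case True
  then obtain a where a: "a \<in> {1..n}" "v (i+2) \<le> v a"
    and u: "gsp_utility n k rank \<beta> v b a = \<beta> (i+2) * v a - slot_price n k b (i+2)"
    using gsp_agent_at_position[OF \<beta> sorted rule eff, of "i+2"] by auto
  have "\<beta> (i+1) * v a - slot_price n k b i \<le> \<beta> (i+2) * v a - slot_price n k b (i+2)"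
    using gsp_nash_overbid[OF rule nash \<beta>, of a "i+1"] vals a True i u
    unfolding slot_price_def by simp
  moreover have "(\<beta> (i+1) - \<beta> (i+2)) * v (i+2) \<le> (\<beta> (i+1) - \<beta> (i+2)) * v a"
    using beta_ok_antimono[OF \<beta>, of "i+1" "i+2"] a by (simp add: mult_left_mono)
  ultimately show ?thesis using True unfolding next_value_def by (simp add: algebra_simps)
next
  case False
  then have "(\<beta> (i+1) - \<beta> (i+2)) * next_value n v (i+1) = 0"
    using beta_ok_zero[OF \<beta>] unfolding next_value_def by auto
  moreover have "slot_price n k b (i+2) = 0"
    using False beta_ok_le[OF \<beta>] unfolding slot_price_def by auto
  moreover have "0 \<le> slot_price n k b i"
    using nash nth_highest_nonneg unfolding gsp_nash_def slot_price_def by simp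
  ultimately show ?thesis by linarith
qed

lemma tail_sum_le_two_prices:
  fixes P D :: "nat \<Rightarrow> real"
  assumes P: "\<And>j. 0 \<le> P j" and step: "\<And>i. 1 \<le> i \<Longrightarrow> i \<le> k \<Longrightarrow> D (i+1) + P (i+2) \<le> P i"
    and "1 \<le> j" "j \<le> k"
  shows "(\<Sum>l=j+1..k. D l) \<le> P j + P (j+1)"
  using \<open>j \<le> k\<close> \<open>1 \<le> j\<close>
proof (induction j rule: inc_induct)
  case base
  then show ?case using P[of k] P[of "k+1"] by simp
next
  case (step j)
  have "(\<Sum>l=j+1..k. D l) = D (j+1) + (\<Sum>l=j+2..k. D l)"
    using \<open>j < k\<close> by (simp add: sum.atLeast_Suc_atMost)
  also have "\<dots> \<le> D (j+1) + P (j+1) + P (j+2)"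
    using step by simp
  also have "\<dots> \<le> P j + P (j+1)"
    using assms(2)[of j] step by simp
  finally show ?case .
qed

lemma sum_tail_sums:
  fixes D :: "nat \<Rightarrow> real"
  shows "(\<Sum>j=1..k. \<Sum>l=j+1..k. D l) = (\<Sum>l=1..k. (real l - 1) * D l)"
proof (induction k)
  case (Suc k)
  have "(\<Sum>j=1..Suc k. \<Sum>l=j+1..Suc k. D l) = (\<Sum>j=1..k. \<Sum>l=j+1..Suc k. D l)"
    by simp
  also have "\<dots> = (\<Sum>j=1..k. (\<Sum>l=j+1..k. D l) + D (Suc k))"
    by (intro sum.cong) auto
  finally show ?case using Suc by (simp add: sum.distrib algebra_simps)
qed simp

lemma weighted_sum_le_twice_prices:
  fixes P D :: "nat \<Rightarrow> real"
  assumes P: "\<And>j. 0 \<le> P j" "P (k+1) = 0"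
    and step: "\<And>i. 1 \<le> i \<Longrightarrow> i \<le> k \<Longrightarrow> D (i+1) + P (i+2) \<le> P i"
  shows "(\<Sum>l=1..k. (real l - 1) * D l) \<le> 2 * (\<Sum>j=1..k. P j)"
proof -
  have shift: "(\<Sum>j=1..k. P (j+1)) + P 1 = (\<Sum>j=1..k. P j) + P (k+1)"
    by (induction k) auto
  have "(\<Sum>l=1..k. (real l - 1) * D l) = (\<Sum>j=1..k. \<Sum>l=j+1..k. D l)"
    by (rule sum_tail_sums[symmetric])
  also have "\<dots> \<le> (\<Sum>j=1..k. P j + P (j+1))"
    by (intro sum_mono tail_sum_le_two_prices[OF P(1) step]) auto
  also have "\<dots> \<le> 2 * (\<Sum>j=1..k. P j)"
    using shift P(1)[of 1] P(2) by (simp add: sum.distrib)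
  finally show ?thesis .
qed

lemma beta_ok_telescope:
  assumes \<beta>: "beta_ok n k \<beta>" and "1 \<le> t"
  shows "\<beta> t = (\<Sum>l=1..k. if t \<le> l then \<beta> l - \<beta> (l+1) else 0)"
proof -
  have "(\<Sum>l=1..k. if t \<le> l then \<beta> l - \<beta> (l+1) else 0) = (\<Sum>l=t..k. \<beta> l - \<beta> (l+1))"
    using \<open>1 \<le> t\<close> by (intro sum.mono_neutral_cong_right) auto
  also have "\<dots> = \<beta> t - \<beta> (k+1)" if "t \<le> k"
    using sum_Suc_diff[of t k "\<lambda>l. - \<beta> l"] that by simp
  finally show ?thesis
    using beta_ok_zero[OF \<beta>, of "k+1"] beta_ok_zero[OF \<beta>, of t] by (cases "t \<le> k") auto
qed

lemma welfare_eq_sum_layers: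
  assumes \<beta>: "beta_ok n k \<beta>" and "finite S" and pos: "\<And>c. c \<in> S \<Longrightarrow> 1 \<le> \<pi> c"
  shows "welfare \<beta> v S \<pi> = (\<Sum>l=1..k. (\<beta> l - \<beta> (l+1)) * (\<Sum>c\<in>{c\<in>S. \<pi> c \<le> l}. v c))"
proof -
  have "welfare \<beta> v S \<pi> = (\<Sum>c\<in>S. \<Sum>l=1..k. if \<pi> c \<le> l then (\<beta> l - \<beta> (l+1)) * v c else 0)"
    unfolding welfare_def
    by (intro sum.cong refl) (auto simp: beta_ok_telescope[OF \<beta> pos] sum_distrib_right intro!: sum.cong)
  also have "\<dots> = (\<Sum>l=1..k. \<Sum>c\<in>S. if \<pi> c \<le> l then (\<beta> l - \<beta> (l+1)) * v c else 0)"
    by (rule sum.swap)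
  also have "\<dots> = (\<Sum>l=1..k. (\<beta> l - \<beta> (l+1)) * (\<Sum>c\<in>{c\<in>S. \<pi> c \<le> l}. v c))"
    by (simp add: sum_distrib_left sum.inter_filter[OF \<open>finite S\<close>, symmetric])
  finally show ?thesis .
qed

lemma top_values_without_le:
  fixes v :: "nat \<Rightarrow> real"
  assumes vals: "\<forall>i\<in>{1..n}. 0 \<le> v i" and sorted: "\<forall>i. 1 \<le> i \<and> i < n \<longrightarrow> v (i+1) \<le> v i"
    and i: "i \<in> {1..n}" and S: "S \<subseteq> {1..n} - {i}" "card S \<le> l" and "l \<le> n"
  shows "(\<Sum>c\<in>S. v c) \<le> (\<Sum>c=1..l. v c) - (if i \<le> l then v i - next_value n v l else 0)"
proof -
  define w where "w = next_value n v l"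
  define g where "g c = max 0 (v c - w)" for c
  have "0 \<le> w" using vals unfolding w_def next_value_def by auto
  have g: "g c = (if c \<le> l then v c - w else 0)" if "c \<in> {1..n}" for c
    using values_antimono[OF sorted, of c "l+1"] values_antimono[OF sorted, of "l+1" c] vals that
    unfolding g_def w_def next_value_def by auto
  have "finite S" using S finite_subset by blast
  have "(\<Sum>c\<in>S. v c) \<le> (\<Sum>c\<in>S. w + g c)"
    by (rule sum_mono) (simp add: g_def)
  also have "\<dots> = real (card S) * w + (\<Sum>c\<in>S. g c)"
    by (simp add: sum.distrib)
  also have "\<dots> \<le> real l * w + (\<Sum>c\<in>{1..n} - {i}. g c)"
    using S \<open>0 \<le> w\<close> by (intro add_mono mult_right_mono sum_mono2) (auto simp: g_def)
  also have "\<dots> = real l * w + (\<Sum>c\<in>{1..n}. g c) - g i"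
    using i by (simp add: sum_diff1)
  also have "(\<Sum>c\<in>{1..n}. g c) = (\<Sum>c=1..l. v c - w)"
    using \<open>l \<le> n\<close> g by (intro sum.mono_neutral_cong_right) auto
  finally show ?thesis
    using g[OF i] unfolding w_def by (simp add: sum_subtractf)
qed

lemma opt_welfare_le:
  assumes "finite A" "A \<subseteq> {1..n}"
    and bound: "\<And>\<pi>. inj_on \<pi> A \<Longrightarrow> \<pi> ` A \<subseteq> {1..n} \<Longrightarrow> welfare \<beta> v A \<pi> \<le> B"
  shows "opt_welfare n \<beta> v A \<le> B"
proof -
  define M where "M = {welfare \<beta> v A \<pi> | \<pi>. inj_on \<pi> A \<and> \<pi> ` A \<subseteq> {1..n}}"
  have "M \<subseteq> (\<lambda>\<pi>. welfare \<beta> v A \<pi>) ` (A \<rightarrow>\<^sub>E {1..n})"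
  proof
    fix x assume "x \<in> M"
    then obtain \<pi> where "x = welfare \<beta> v A \<pi>" "\<pi> ` A \<subseteq> {1..n}" unfolding M_def by blast
    moreover have "welfare \<beta> v A \<pi> = welfare \<beta> v A (restrict \<pi> A)"
      unfolding welfare_def by (rule sum.cong) auto
    ultimately show "x \<in> (\<lambda>\<pi>. welfare \<beta> v A \<pi>) ` (A \<rightarrow>\<^sub>E {1..n})" by force
  qed
  then have "finite M" using \<open>finite A\<close> finite_subset by (blast intro: finite_PiE)
  moreover have "welfare \<beta> v A id \<in> M" using \<open>A \<subseteq> {1..n}\<close> unfolding M_def by (auto intro!: exI[of _ id])
  ultimately show ?thesis
    using bound unfolding opt_welfare_def M_def[symmetric] by (intro Max.boundedI) (auto simp: M_def)
qed

lemma opt_welfare_without_le: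
  fixes v :: "nat \<Rightarrow> real"
  assumes \<beta>: "beta_ok n k \<beta>" and vals: "\<forall>i\<in>{1..n}. 0 \<le> v i"
    and sorted: "\<forall>i. 1 \<le> i \<and> i < n \<longrightarrow> v (i+1) \<le> v i" and i: "i \<in> {1..n}"
  shows "opt_welfare n \<beta> v ({1..n} - {i}) \<le> (\<Sum>l=1..k. (\<beta> l - \<beta> (l+1)) *
     ((\<Sum>c=1..l. v c) - (if i \<le> l then v i - next_value n v l else 0)))"
proof (rule opt_welfare_le)
  fix \<pi> assume \<pi>: "inj_on \<pi> ({1..n} - {i})" "\<pi> ` ({1..n} - {i}) \<subseteq> {1..n}"
  then have pos: "1 \<le> \<pi> c" if "c \<in> {1..n} - {i}" for c
    using that by force
  then have "welfare \<beta> v ({1..n} - {i}) \<pi> =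
      (\<Sum>l=1..k. (\<beta> l - \<beta> (l+1)) * (\<Sum>c\<in>{c\<in>{1..n} - {i}. \<pi> c \<le> l}. v c))"
    by (intro welfare_eq_sum_layers[OF \<beta>]) auto
  also have "\<dots> \<le> (\<Sum>l=1..k. (\<beta> l - \<beta> (l+1)) *
     ((\<Sum>c=1..l. v c) - (if i \<le> l then v i - next_value n v l else 0)))"
  proof (rule sum_mono)
    fix l assume l: "l \<in> {1..k}"
    define S where "S = {c\<in>{1..n} - {i}. \<pi> c \<le> l}"
    have "card S \<le> card {1..l}"
      using \<pi> pos by (intro card_inj_on_le[of \<pi>]) (auto simp: S_def intro: inj_on_subset)
    moreover have "S \<subseteq> {1..n} - {i}" "l \<le> n" using l beta_ok_le[OF \<beta>] unfolding S_def by auto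
    ultimately have "(\<Sum>c\<in>S. v c) \<le> (\<Sum>c=1..l. v c) - (if i \<le> l then v i - next_value n v l else 0)"
      using top_values_without_le[OF vals sorted i] by simp
    moreover have "0 \<le> \<beta> l - \<beta> (l+1)" using beta_ok_antimono[OF \<beta>, of l "l+1"] l by simp
    ultimately show "(\<beta> l - \<beta> (l+1)) * (\<Sum>c\<in>{c\<in>{1..n} - {i}. \<pi> c \<le> l}. v c) \<le> (\<beta> l - \<beta> (l+1)) *
        ((\<Sum>c=1..l. v c) - (if i \<le> l then v i - next_value n v l else 0))"
      unfolding S_def by (rule mult_left_mono)
  qed
  finally show "welfare \<beta> v ({1..n} - {i}) \<pi> \<le> \<dots>" .
qed auto

lemma vcg_revenue_eq:
  "vcg_revenue n \<beta> v = (\<Sum>i\<in>{1..n}. opt_welfare n \<beta> v ({1..n} - {i}))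
     - (real n - 1) * welfare \<beta> v {1..n} (vcg_assignment n \<beta> v)"
proof -
  define W where "W = welfare \<beta> v {1..n} (vcg_assignment n \<beta> v)"
  have "clarke_payment n \<beta> v i
      = opt_welfare n \<beta> v ({1..n} - {i}) - W + \<beta> (vcg_assignment n \<beta> v i) * v i"
    if "i \<in> {1..n}" for i
    using that unfolding clarke_payment_def W_def welfare_def by (simp add: sum_diff1)
  then have "vcg_revenue n \<beta> v
      = (\<Sum>i\<in>{1..n}. opt_welfare n \<beta> v ({1..n} - {i}) - W + \<beta> (vcg_assignment n \<beta> v i) * v i)"
    unfolding vcg_revenue_def by (intro sum.cong) auto
  then show ?thesis
    unfolding W_def welfare_def by (simp add: sum.distrib sum_subtractf algebra_simps)
qed

lemma vcg_revenue_le: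
  assumes \<beta>: "beta_ok n k \<beta>" and vals: "\<forall>i\<in>{1..n}. 0 \<le> v i"
    and sorted: "\<forall>i. 1 \<le> i \<and> i < n \<longrightarrow> v (i+1) \<le> v i" and eff: "efficient n \<beta> v \<sigma>"
  shows "vcg_revenue n \<beta> v \<le> (\<Sum>l=1..k. real l * ((\<beta> l - \<beta> (l+1)) * next_value n v l))"
proof (cases "n = 0")
  case True
  then show ?thesis using beta_ok_le[OF \<beta>] unfolding vcg_revenue_def by simp
next
  case False
  define d where "d l = \<beta> l - \<beta> (l+1)" for l
  define T where "T l = (\<Sum>c=1..l. v c)" for l
  define w where "w l = next_value n v l" for l
  have "k \<le> n" using beta_ok_le[OF \<beta>] .
  have "efficient n \<beta> v (vcg_assignment n \<beta> v)"
    unfolding vcg_assignment_def using someI[of "efficient n \<beta> v", OF eff] .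
  moreover have "assignment n id" unfolding assignment_def by simp
  ultimately have "welfare \<beta> v {1..n} id \<le> welfare \<beta> v {1..n} (vcg_assignment n \<beta> v)"
    unfolding efficient_def by blast
  moreover have "welfare \<beta> v {1..n} id = (\<Sum>l=1..k. d l * (\<Sum>c\<in>{c\<in>{1..n}. id c \<le> l}. v c))"
    unfolding d_def by (rule welfare_eq_sum_layers[OF \<beta>]) auto
  also have "\<dots> = (\<Sum>l=1..k. d l * T l)"
  proof (intro sum.cong refl)
    fix l assume "l \<in> {1..k}"
    then have "{c\<in>{1..n}. id c \<le> l} = {1..l}" using \<open>k \<le> n\<close> by auto
    then show "d l * (\<Sum>c\<in>{c\<in>{1..n}. id c \<le> l}. v c) = d l * T l" unfolding T_def by simp
  qed
  ultimately have W: "(\<Sum>l=1..k. d l * T l) \<le> welfare \<beta> v {1..n} (vcg_assignment n \<beta> v)"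
    by simp
  have "(\<Sum>i\<in>{1..n}. opt_welfare n \<beta> v ({1..n} - {i}))
      \<le> (\<Sum>i\<in>{1..n}. \<Sum>l=1..k. d l * (T l - (if i \<le> l then v i - w l else 0)))"
    using opt_welfare_without_le[OF \<beta> vals sorted] unfolding d_def T_def w_def by (intro sum_mono) auto
  also have "\<dots> = (\<Sum>l=1..k. \<Sum>i\<in>{1..n}. d l * (T l - (if i \<le> l then v i - w l else 0)))"
    by (rule sum.swap)
  also have "\<dots> = (\<Sum>l=1..k. d l * (real n * T l - (\<Sum>i\<in>{1..n}. if i \<le> l then v i - w l else 0)))"
    by (intro sum.cong refl) (simp add: sum_distrib_left[symmetric] sum_subtractf)
  also have "\<dots> = (\<Sum>l=1..k. d l * (real n * T l - (T l - real l * w l)))"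
  proof (intro sum.cong refl)
    fix l assume "l \<in> {1..k}"
    then have "(\<Sum>i\<in>{1..n}. if i \<le> l then v i - w l else 0) = (\<Sum>i=1..l. v i - w l)"
      using \<open>k \<le> n\<close> by (intro sum.mono_neutral_cong_right) auto
    then show "d l * (real n * T l - (\<Sum>i\<in>{1..n}. if i \<le> l then v i - w l else 0))
        = d l * (real n * T l - (T l - real l * w l))"
      unfolding T_def by (simp add: sum_subtractf)
  qed
  finally have "(\<Sum>i\<in>{1..n}. opt_welfare n \<beta> v ({1..n} - {i}))
      \<le> (\<Sum>l=1..k. d l * (real n * T l - (T l - real l * w l)))" .
  moreover have "(real n - 1) * (\<Sum>l=1..k. d l * T l)
      \<le> (real n - 1) * welfare \<beta> v {1..n} (vcg_assignment n \<beta> v)"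
    using W False by (intro mult_left_mono) auto
  ultimately show ?thesis
    unfolding vcg_revenue_eq d_def w_def
    by (simp add: algebra_simps sum_distrib_left sum.distrib sum_subtractf)
qed

theorem theorem2:
  fixes n k :: nat and \<beta> v b :: "nat \<Rightarrow> real" and rank :: "(nat \<Rightarrow> real) \<Rightarrow> nat \<Rightarrow> nat"
  assumes "beta_ok n k \<beta>"
    and "\<forall>i\<in>{1..n}. v i \<ge> 0"
    and "\<forall>i. 1 \<le> i \<and> i < n \<longrightarrow> v (i+1) \<le> v i"
    and "gsp_rule n rank"
    and "gsp_nash n k rank \<beta> v b"
    and "efficient n \<beta> v (rank b)"
  shows "gsp_revenue n k rank b \<ge>
    (1/2) * (vcg_revenue n \<beta> v
      - (\<Sum>j=1..k. (\<beta> j - \<beta> (j+1)) * (if j + 1 \<le> n then v (j+1) else 0)))"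
proof -
  define P where "P = slot_price n k b"
  define D where "D l = (\<beta> l - \<beta> (l+1)) * next_value n v l" for l
  have "\<And>j. 0 \<le> P j"
    using assms(5) nth_highest_nonneg unfolding gsp_nash_def P_def slot_price_def by simp
  moreover have "P (k+1) = 0" unfolding P_def slot_price_def by simp
  moreover have "\<And>i. 1 \<le> i \<Longrightarrow> i \<le> k \<Longrightarrow> D (i+1) + P (i+2) \<le> P i"
    using slot_price_step[OF assms] unfolding P_def D_def by (simp add: add.assoc)
  ultimately have "(\<Sum>l=1..k. (real l - 1) * D l) \<le> 2 * gsp_revenue n k rank b"
    using weighted_sum_le_twice_prices[of P k D]
      gsp_revenue_eq_sum_slot_price[OF assms(4) beta_ok_le[OF assms(1)]] unfolding P_def by simp
  moreover have "vcg_revenue n \<beta> v \<le> (\<Sum>l=1..k. real l * D l)"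
    using vcg_revenue_le[OF assms(1-3,6)] unfolding D_def .
  moreover have "(\<Sum>l=1..k. (real l - 1) * D l) = (\<Sum>l=1..k. real l * D l) - (\<Sum>l=1..k. D l)"
    by (simp add: algebra_simps sum_subtractf)
  moreover have "(\<Sum>j=1..k. (\<beta> j - \<beta> (j+1)) * (if j + 1 \<le> n then v (j+1) else 0)) = (\<Sum>l=1..k. D l)"
    unfolding D_def next_value_def ..
  ultimately have "vcg_revenue n \<beta> v
      - (\<Sum>j=1..k. (\<beta> j - \<beta> (j+1)) * (if j + 1 \<le> n then v (j+1) else 0)) \<le> 2 * gsp_revenue n k rank b"
    by linarith
  then show ?thesis by simp
qed

end
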